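(* Let $G$ be a connected $4$-regular graph such that for every vertex $v$, the subgraph of $G$ induced by the neighbors of $v$ is isomorphic either to the cycle $C_4$ or to the path $P_4$ on $4$ vertices. Then $G$ is isomorphic to the triangular cycle $TC_n$ for some $n\ge6$.
   Context: The triangular cycle $TC_n$ is the graph with vertex set $[n]=\{1,\dots,n\}$ in which $i\ne j$ are adjacent iff $i-j\pmod n\in\{n-2,n-1,1,2\}$. *)

theory Defs
  imports Main
begin

definition finite_simple_graph :: "'a set \<Rightarrow> ('a \<Rightarrow> 'a \<Rightarrow> bool) \<Rightarrow> bool" where
  "finite_simple_graph V E \<longleftrightarrow> finite V \<and>
     (\<forall>x y. E x y \<longrightarrow> x \<in> V \<and> y \<in> V) \<and>
     (\<forall>x y. E x y \<longrightarrow> E y x) \<and> (\<forall>x. \<not> E x x)"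

definition neighbours :: "'a set \<Rightarrow> ('a \<Rightarrow> 'a \<Rightarrow> bool) \<Rightarrow> 'a \<Rightarrow> 'a set" where
  "neighbours V E v = {u \<in> V. E v u}"

definition regular :: "nat \<Rightarrow> 'a set \<Rightarrow> ('a \<Rightarrow> 'a \<Rightarrow> bool) \<Rightarrow> bool" where
  "regular k V E \<longleftrightarrow> (\<forall>v\<in>V. card (neighbours V E v) = k)"

definition connected_graph :: "'a set \<Rightarrow> ('a \<Rightarrow> 'a \<Rightarrow> bool) \<Rightarrow> bool" where
  "connected_graph V E \<longleftrightarrow> V \<noteq> {} \<and>
     (\<forall>u\<in>V. \<forall>v\<in>V. (\<lambda>x y. x \<in> V \<and> y \<in> V \<and> E x y)\<^sup>*\<^sup>* u v)"

definition graph_iso :: "'a set \<Rightarrow> ('a \<Rightarrow> 'a \<Rightarrow> bool) \<Rightarrow> 'b set \<Rightarrow> ('b \<Rightarrow> 'b \<Rightarrow> bool) \<Rightarrow> bool" where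
  "graph_iso V1 E1 V2 E2 \<longleftrightarrow>
     (\<exists>f. bij_betw f V1 V2 \<and> (\<forall>x\<in>V1. \<forall>y\<in>V1. E1 x y \<longleftrightarrow> E2 (f x) (f y)))"

definition induced_adj :: "('a \<Rightarrow> 'a \<Rightarrow> bool) \<Rightarrow> 'a set \<Rightarrow> 'a \<Rightarrow> 'a \<Rightarrow> bool" where
  "induced_adj E S x y \<longleftrightarrow> x \<in> S \<and> y \<in> S \<and> E x y"

definition C4_adj :: "nat \<Rightarrow> nat \<Rightarrow> bool" where
  "C4_adj i j \<longleftrightarrow> i < 4 \<and> j < 4 \<and> ((i + 1) mod 4 = j \<or> (j + 1) mod 4 = i)"

definition P4_adj :: "nat \<Rightarrow> nat \<Rightarrow> bool" where
  "P4_adj i j \<longleftrightarrow> i < 4 \<and> j < 4 \<and> (i + 1 = j \<or> j + 1 = i)"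

definition TC_adj :: "nat \<Rightarrow> nat \<Rightarrow> nat \<Rightarrow> bool" where
  "TC_adj n i j \<longleftrightarrow> i \<in> {1..n} \<and> j \<in> {1..n} \<and> i \<noteq> j \<and>
     (int i - int j) mod int n \<in> {int n - 2, int n - 1, 1, 2}"

end

theory Submission imports Defs begin

text \<open>
  If the link of some v is a cycle a b c d, then
  each of a, b, c, d has exactly one neighbour outside v and the cycle, and the link conditions
  force these four outer neighbours to coincide: G is the octahedron, i.e. TC 6.

  Otherwise every link is a path p1 p2 p3 p4, and its inner vertices p2, p3 are exactly the
  neighbours of v with two common neighbours; call them the middles of v. The middle relation is
  symmetric and 2-regular, and walking along it (always to the middle not just visited) gives a
  sequence s in which the link of s (k + 2) is the path s k, s (k + 1), s (k + 3), s (k + 4).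
  The walk is periodic; it cannot meet itself in reverse, so it is injective on a least period n.
  Moreover n \<ge> 6, because s 0, ..., s 4 are distinct and s 4 is adjacent to s 5 but not to s 0.
  Then i \<mapsto> s i is an isomorphism from TC n onto G.
\<close>

lemma graph_iso_sym:
  assumes "graph_iso V1 E1 V2 E2"
  shows "graph_iso V2 E2 V1 E1"
proof -
  obtain f where f: "bij_betw f V1 V2" "\<forall>x\<in>V1. \<forall>y\<in>V1. E1 x y \<longleftrightarrow> E2 (f x) (f y)"
    using assms unfolding graph_iso_def by blast
  have g: "bij_betw (inv_into V1 f) V2 V1" using f(1) by (rule bij_betw_inv_into)
  have "\<forall>y\<in>V2. inv_into V1 f y \<in> V1 \<and> f (inv_into V1 f y) = y"
    using f(1) by (metis bij_betw_def bij_betw_inv_into_right inv_into_into order_refl)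
  then show ?thesis unfolding graph_iso_def using g f(2) by metis
qed

lemma TC_adj_6:
  "\<forall>i\<in>{1,2,3,4,5,6::nat}. \<forall>j\<in>{1,2,3,4,5,6}. TC_adj 6 i j \<longleftrightarrow> i \<noteq> j \<and> i + 3 \<noteq> j \<and> j + 3 \<noteq> i"
  by (simp add: TC_adj_def)

lemma TC_adj_iff_mod:
  fixes n i j :: nat
  assumes "2 \<le> n" "i \<in> {1..n}" "j \<in> {1..n}"
  shows "TC_adj n i j \<longleftrightarrow> i \<noteq> j \<and> (i + n - j) mod n \<in> {1, 2, n - 2, n - 1}"
proof -
  have "int i - int j + int n = int (i + n - j)" using assms by auto
  then have "(int i - int j) mod int n = int (i + n - j) mod int n" by (metis mod_add_self2)
  also have "\<dots> = int ((i + n - j) mod n)" by (simp add: zmod_int)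
  finally have m: "(int i - int j) mod int n = int ((i + n - j) mod n)" .
  have "int ((i + n - j) mod n) \<in> {int n - 2, int n - 1, 1, 2} \<longleftrightarrow> (i + n - j) mod n \<in> {1, 2, n - 2, n - 1}"
    using assms(1) by auto
  then show ?thesis unfolding TC_adj_def using m assms by auto
qed

lemma mod_add_left_cancel:
  fixes a q t n :: nat
  shows "(a + q) mod n = (a + t) mod n \<longleftrightarrow> q mod n = t mod n"
proof -
  have "(a + q) mod n = (a + t) mod n \<longleftrightarrow> (int a + int q) mod int n = (int a + int t) mod int n"
    by (metis of_nat_add of_nat_eq_iff zmod_int)
  also have "\<dots> \<longleftrightarrow> int n dvd (int q - int t)" by (simp add: mod_eq_dvd_iff)
  also have "\<dots> \<longleftrightarrow> q mod n = t mod n" by (metis mod_eq_dvd_iff of_nat_eq_iff zmod_int)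
  finally show ?thesis .
qed

locale locally_C4_or_P4 =
  fixes V :: "'a set" and E :: "'a \<Rightarrow> 'a \<Rightarrow> bool"
  assumes simple: "finite_simple_graph V E"
    and connected: "connected_graph V E"
    and regular: "regular 4 V E"
    and links: "\<forall>v\<in>V. graph_iso (neighbours V E v) (induced_adj E (neighbours V E v)) {0..<4} C4_adj
             \<or> graph_iso (neighbours V E v) (induced_adj E (neighbours V E v)) {0..<4} P4_adj"
begin

abbreviation "N \<equiv> neighbours V E"

lemma adj_in_V: "E x y \<Longrightarrow> x \<in> V \<and> y \<in> V"
  using simple unfolding finite_simple_graph_def by blast

lemma adj_symD: "E x y \<Longrightarrow> E y x"
  using simple unfolding finite_simple_graph_def by blast

lemma adj_sym: "E x y \<longleftrightarrow> E y x"
  using adj_symD by blast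

lemma adj_irrefl: "\<not> E x x"
  using simple unfolding finite_simple_graph_def by blast

lemma finite_V: "finite V"
  using simple unfolding finite_simple_graph_def by blast

lemma in_N_iff: "y \<in> N x \<longleftrightarrow> E x y"
  unfolding neighbours_def using adj_in_V by blast

lemma N_subset_V: "N x \<subseteq> V"
  unfolding neighbours_def by blast

lemma card_N: "v \<in> V \<Longrightarrow> card (N v) = 4"
  using regular unfolding regular_def by blast

lemma V_subset_closed:
  assumes "x \<in> S" "x \<in> V" "\<forall>y\<in>S. N y \<subseteq> S"
  shows "V \<subseteq> S"
proof
  fix u assume "u \<in> V"
  then have "(\<lambda>x y. x \<in> V \<and> y \<in> V \<and> E x y)\<^sup>*\<^sup>* x u"
    using connected assms(2) unfolding connected_graph_def by blast
  then show "u \<in> S"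
    by (induction rule: rtranclp_induct) (use assms(1,3) in_N_iff in blast)+
qed

lemma fourth_neighbour:
  assumes "p \<in> V" "{v, q1, q2} \<subseteq> N p" "distinct [v, q1, q2]"
  obtains x where "N p = {v, q1, q2, x}" "x \<notin> {v, q1, q2}"
proof -
  have "card (N p - {v, q1, q2}) = 1"
    using card_Diff_subset[OF _ assms(2)] distinct_card[OF assms(3)] card_N[OF assms(1)] by simp
  then obtain x where "N p - {v, q1, q2} = {x}" by (meson card_1_singletonE)
  then show ?thesis using that assms(2) by blast
qed

definition link_path :: "'a \<Rightarrow> 'a \<Rightarrow> 'a \<Rightarrow> 'a \<Rightarrow> 'a \<Rightarrow> bool" where
  "link_path u p1 p2 p3 p4 \<longleftrightarrow> distinct [p1, p2, p3, p4] \<and> N u = {p1, p2, p3, p4}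
     \<and> E p1 p2 \<and> E p2 p3 \<and> E p3 p4 \<and> \<not> E p1 p3 \<and> \<not> E p2 p4"

lemma link_path_in_V:
  assumes "link_path v p1 p2 p3 p4"
  shows "v \<in> V"
proof -
  have "E v p1" using assms in_N_iff unfolding link_path_def by auto
  then show ?thesis using adj_in_V by blast
qed

lemma link_path_rev: "link_path u p1 p2 p3 p4 \<Longrightarrow> link_path u p4 p3 p2 p1"
  unfolding link_path_def using adj_sym by auto

lemma link_enum:
  fixes R :: "nat \<Rightarrow> nat \<Rightarrow> bool"
  assumes "graph_iso (N v) (induced_adj E (N v)) {0..<4} R"
  obtains p where "N v = {p 0, p 1, p 2, p 3}" "distinct [p 0, p 1, p 2, p 3]"
    "\<forall>i<4. \<forall>j<4. E (p i) (p j) \<longleftrightarrow> R i j"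
proof -
  obtain p where p: "bij_betw p {0..<4} (N v)"
    "\<forall>i\<in>{0..<4}. \<forall>j\<in>{0..<4}. R i j \<longleftrightarrow> induced_adj E (N v) (p i) (p j)"
    using graph_iso_sym[OF assms] unfolding graph_iso_def by blast
  have "N v = p ` set [0..<4]" "distinct (map p [0..<4])"
    using p(1) unfolding bij_betw_def by (simp_all add: distinct_map)
  then have "N v = {p 0, p 1, p 2, p 3}" "distinct [p 0, p 1, p 2, p 3]"
    by (simp_all add: upt_rec numeral_eq_Suc)
  moreover have "\<forall>i<4. \<forall>j<4. E (p i) (p j) \<longleftrightarrow> R i j"
    using p(2) bij_betw_apply[OF p(1)] unfolding induced_adj_def by auto
  ultimately show ?thesis using that by blast
qed

lemma link_path_exists:
  assumes "v \<in> V"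
  obtains p1 p2 p3 p4 where "link_path v p1 p2 p3 p4"
    "E p1 p4 \<longleftrightarrow> graph_iso (N v) (induced_adj E (N v)) {0..<4} C4_adj"
proof (cases "graph_iso (N v) (induced_adj E (N v)) {0..<4} C4_adj")
  case True
  then obtain p where "N v = {p 0, p 1, p 2, p 3}" "distinct [p 0, p 1, p 2, p 3]"
    "\<forall>i<4. \<forall>j<4. E (p i) (p j) \<longleftrightarrow> C4_adj i j"
    by (rule link_enum)
  moreover from this(3) have "E (p 0) (p 1)" "E (p 1) (p 2)" "E (p 2) (p 3)"
    "\<not> E (p 0) (p 2)" "\<not> E (p 1) (p 3)" "E (p 0) (p 3)"
    by (simp_all add: C4_adj_def)
  ultimately show ?thesis using that True unfolding link_path_def by blast
next
  case False
  then have "graph_iso (N v) (induced_adj E (N v)) {0..<4} P4_adj" using links assms by blast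
  then obtain p where "N v = {p 0, p 1, p 2, p 3}" "distinct [p 0, p 1, p 2, p 3]"
    "\<forall>i<4. \<forall>j<4. E (p i) (p j) \<longleftrightarrow> P4_adj i j"
    by (rule link_enum)
  moreover from this(3) have "E (p 0) (p 1)" "E (p 1) (p 2)" "E (p 2) (p 3)"
    "\<not> E (p 0) (p 2)" "\<not> E (p 1) (p 3)" "\<not> E (p 0) (p 3)"
    by (simp_all add: P4_adj_def)
  ultimately show ?thesis using that False unfolding link_path_def by blast
qed

lemma link_no_isolated_vertex:
  assumes "u \<in> V" "q \<in> N u"
  obtains z where "z \<in> N u" "E q z"
proof -
  obtain p1 p2 p3 p4 where "link_path u p1 p2 p3 p4" by (rule link_path_exists[OF assms(1)])
  then have "q \<in> {p1, p2, p3, p4}" "{p1, p2, p3, p4} = N u" "E p1 p2" "E p2 p3" "E p3 p4"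
    using assms(2) unfolding link_path_def by auto
  moreover have "E p2 p1" "E p3 p2" "E p4 p3" using calculation(3-5) adj_sym by metis+
  ultimately show ?thesis using that by blast
qed

lemma link_no_isolated_edge:
  assumes "u \<in> V" "q \<in> N u" "r \<in> N u" "E q r" "N u \<inter> N q = {r}" "N u \<inter> N r = {q}"
  shows False
proof -
  obtain p1 p2 p3 p4 where "link_path u p1 p2 p3 p4" by (rule link_path_exists[OF assms(1)])
  then have d: "distinct [p1, p2, p3, p4]" and Nu: "N u = {p1, p2, p3, p4}"
    and e: "E p1 p2" "E p2 p3" "E p3 p4"
    unfolding link_path_def by auto
  have "{p1, p3} \<subseteq> N u \<inter> N p2" "{p2, p4} \<subseteq> N u \<inter> N p3"
    using Nu e adj_sym[of p1 p2] adj_sym[of p2 p3] by (simp_all add: in_N_iff)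
  then have "q \<notin> {p2, p3}" "r \<notin> {p2, p3}" using assms(5,6) d by auto
  then have qr: "{q, r} = {p1, p4}" using assms(2-4) Nu adj_irrefl by auto
  then have "E p1 p4" using assms(4) adj_sym[of p4 p1] by (auto simp: doubleton_eq_iff)
  then have "{p2, p4} \<subseteq> N u \<inter> N p1" using Nu e by (simp add: in_N_iff)
  then show False using qr assms(5,6) d by (auto simp: doubleton_eq_iff)
qed

lemma link_cycle_rotate:
  assumes "link_path v a b c d" "E a d"
  shows "link_path v b c d a" "E b a"
  using assms unfolding link_path_def by (auto simp: adj_sym insert_commute)

lemma link_cycle_outer_neighbour:
  assumes "v \<in> V" "link_path v a b c d" "E a d"
  obtains x where "N a = {v, b, d, x}" "x \<notin> {v, a, b, c, d}"
proof -
  have dist: "distinct [a, b, c, d]" and Nv: "N v = {a, b, c, d}" and "E a b" "\<not> E a c"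
    using assms(2) unfolding link_path_def by auto
  then have "E v a" "E v b" "E v d" using in_N_iff by auto
  then have "a \<in> V" "{v, b, d} \<subseteq> N a" "distinct [v, b, d]"
    using adj_in_V adj_irrefl dist \<open>E a b\<close> assms(3) by (auto simp: in_N_iff adj_sym)
  then obtain x where x: "N a = {v, b, d, x}" "x \<notin> {v, b, d}" by (rule fourth_neighbour)
  moreover have "E a x" using x(1) in_N_iff by blast
  then have "x \<noteq> a" "x \<noteq> c" using \<open>\<not> E a c\<close> adj_irrefl by auto
  ultimately show ?thesis using that by blast
qed

lemma outer_neighbour_shared:
  assumes "p \<in> V" "N p = {v, q1, q2, x}" "\<not> E v x"
    "N q1 = {v, r1, r2, y1}" "N q2 = {v, r1, r2, y2}" "x \<notin> {v, r1, r2}"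
  shows "x = y1 \<or> x = y2"
proof -
  obtain z where "z \<in> N p" "E x z" using link_no_isolated_vertex[OF assms(1)] assms(2) by blast
  then have "z \<in> {q1, q2}" using assms(2,3) adj_irrefl adj_sym by auto
  then have "x \<in> N q1 \<or> x \<in> N q2" using \<open>E x z\<close> in_N_iff adj_sym by auto
  then show ?thesis using assms(4-6) by auto
qed

lemma outer_neighbour_adj_opposite:
  assumes "N a = {v, b, d, w}" "N b = {v, a, c, w}" "E a b" "\<not> E v w" "w \<in> V"
  shows "w \<in> N c \<or> w \<in> N d"
proof (rule ccontr)
  assume "\<not> ?thesis"
  then have "N w \<inter> N a = {b}" "N w \<inter> N b = {a}"
    using assms(1,2,4) adj_irrefl by (auto simp: in_N_iff adj_sym)
  moreover have "a \<in> N w" "b \<in> N w" using assms(1,2) by (auto simp: in_N_iff adj_sym)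
  ultimately show False using link_no_isolated_edge[OF assms(5)] assms(3) by blast
qed

lemma link_cycle_outer_neighbours:
  assumes "v \<in> V" "link_path v a b c d" "E a d"
  obtains xa xb xc xd
  where "N a = {v, b, d, xa}" "xa \<notin> {v, a, b, c, d}" "N b = {v, c, a, xb}" "xb \<notin> {v, a, b, c, d}"
    "N c = {v, d, b, xc}" "xc \<notin> {v, a, b, c, d}" "N d = {v, a, c, xd}" "xd \<notin> {v, a, b, c, d}"
proof -
  have l2: "link_path v b c d a" "E b a" using link_cycle_rotate[OF assms(2,3)] by blast+
  have l3: "link_path v c d a b" "E c b" using link_cycle_rotate[OF l2] by blast+
  have l4: "link_path v d a b c" "E d c" using link_cycle_rotate[OF l3] by blast+
  obtain xa where "N a = {v, b, d, xa}" "xa \<notin> {v, a, b, c, d}"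
    by (rule link_cycle_outer_neighbour[OF assms])
  moreover obtain xb where "N b = {v, c, a, xb}" "xb \<notin> {v, a, b, c, d}"
    by (rule link_cycle_outer_neighbour[OF assms(1) l2]) auto
  moreover obtain xc where "N c = {v, d, b, xc}" "xc \<notin> {v, a, b, c, d}"
    by (rule link_cycle_outer_neighbour[OF assms(1) l3]) auto
  moreover obtain xd where "N d = {v, a, c, xd}" "xd \<notin> {v, a, b, c, d}"
    by (rule link_cycle_outer_neighbour[OF assms(1) l4]) auto
  ultimately show ?thesis by (rule that)
qed

lemma link_cycle_common_outer:
  assumes "v \<in> V" "link_path v a b c d" "E a d"
  obtains w where "N a = {v, b, d, w}" "N b = {v, a, c, w}" "N c = {v, b, d, w}" "N d = {v, a, c, w}"
    "w \<notin> {v, a, b, c, d}"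
proof -
  obtain xa xb xc xd where Na: "N a = {v, b, d, xa}" "xa \<notin> {v, a, b, c, d}"
    and Nb: "N b = {v, c, a, xb}" "xb \<notin> {v, a, b, c, d}"
    and Nc: "N c = {v, d, b, xc}" "xc \<notin> {v, a, b, c, d}"
    and Nd: "N d = {v, a, c, xd}" "xd \<notin> {v, a, b, c, d}"
    by (rule link_cycle_outer_neighbours[OF assms])
  have Na': "N a = {v, d, b, xa}" and Nb': "N b = {v, a, c, xb}"
    and Nc': "N c = {v, b, d, xc}" and Nd': "N d = {v, c, a, xd}"
    using Na(1) Nb(1) Nc(1) Nd(1) by auto
  have Nv: "N v = {a, b, c, d}" and E: "E a b" "E b c" "E c d" "E d a"
    using assms(2,3) adj_sym unfolding link_path_def by auto
  have far: "\<not> E v xa" "\<not> E v xb" "\<not> E v xc" "\<not> E v xd"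
    using Na(2) Nb(2) Nc(2) Nd(2) Nv by (simp_all add: in_N_iff[symmetric])
  have inV: "xa \<in> V" "xb \<in> V" "xc \<in> V" "xd \<in> V"
    using Na(1) Nb(1) Nc(1) Nd(1) N_subset_V[of a] N_subset_V[of b] N_subset_V[of c]
      N_subset_V[of d]
    by auto
  have "a \<in> V" "b \<in> V" "c \<in> V" "d \<in> V" using Nv N_subset_V[of v] by auto
  then have "xa = xb \<or> xa = xd" "xb = xc \<or> xb = xa" "xc = xd \<or> xc = xb" "xd = xa \<or> xd = xc"
    using outer_neighbour_shared[OF _ Na(1) far(1) Nb' Nd(1)]
      outer_neighbour_shared[OF _ Nb(1) far(2) Nc' Na(1)]
      outer_neighbour_shared[OF _ Nc(1) far(3) Nd(1) Nb']
      outer_neighbour_shared[OF _ Nd(1) far(4) Na(1) Nc']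
      Na(2) Nb(2) Nc(2) Nd(2)
    by simp_all
  moreover have "xa = xc \<or> xa = xd" if "xa = xb"
    using outer_neighbour_adj_opposite[OF Na(1) Nb'[folded that] E(1) far(1) inV(1)]
      Nc' Nd Na(2) by auto
  moreover have "xb = xd \<or> xb = xa" if "xb = xc"
    using outer_neighbour_adj_opposite[OF Nb(1) Nc'[folded that] E(2) far(2) inV(2)]
      Nd Na Nb(2) by auto
  moreover have "xc = xa \<or> xc = xb" if "xc = xd"
    using outer_neighbour_adj_opposite[OF Nc(1) Nd'[folded that] E(3) far(3) inV(3)]
      Na Nb' Nc(2) by auto
  moreover have "xd = xb \<or> xd = xc" if "xd = xa"
    using outer_neighbour_adj_opposite[OF Nd(1) Na'[folded that] E(4) far(4) inV(4)]
      Nb' Nc' Nd(2) by auto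
  ultimately have "xb = xa" "xc = xa" "xd = xa" by metis+
  then show ?thesis using that Na Nb' Nc' Nd by simp
qed

lemma octahedron_iso_TC6:
  assumes "V = {v, a, b, c, d, w}" "distinct [v, a, b, w, c, d]"
    "N v = {a, b, c, d}" "N a = {v, b, d, w}" "N b = {v, a, c, w}" "N c = {v, b, d, w}"
    "N d = {v, a, c, w}" "N w = {a, b, c, d}"
  shows "graph_iso V E {1..6} (TC_adj 6)"
proof -
  \<comment> \<open>the antipodal pairs v w, a c and b d are placed at distance 3\<close>
  define g where "g i = [v, a, b, w, c, d] ! (i - 1)" for i :: nat
  have s6: "{1..6::nat} = {1, 2, 3, 4, 5, 6}" by auto
  have g: "g 1 = v" "g (Suc 0) = v" "g 2 = a" "g 3 = b" "g 4 = w" "g 5 = c" "g 6 = d"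
    unfolding g_def by simp_all
  have "g ` {1..6} = V" "inj_on g {1..6}"
    unfolding s6 inj_on_def using assms(1,2) by (auto simp: g)
  then have "bij_betw g {1..6} V" by (simp add: bij_betw_def)
  moreover have "\<forall>i\<in>{1,2,3,4,5,6::nat}. \<forall>j\<in>{1,2,3,4,5,6}.
      i \<noteq> j \<and> i + 3 \<noteq> j \<and> j + 3 \<noteq> i \<longleftrightarrow> E (g i) (g j)"
    using assms(2) by (simp add: g in_N_iff[symmetric] assms(3-8)) blast
  then have "\<forall>i\<in>{1..6}. \<forall>j\<in>{1..6}. TC_adj 6 i j \<longleftrightarrow> E (g i) (g j)"
    unfolding s6 using TC_adj_6 by simp
  ultimately show ?thesis using graph_iso_sym unfolding graph_iso_def by blast
qed

lemma link_cycle_iso_TC6: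
  assumes "link_path v a b c d" "E a d"
  shows "graph_iso V E {1..6} (TC_adj 6)"
proof -
  have "v \<in> V" using link_path_in_V[OF assms(1)] .
  obtain w where N: "N a = {v, b, d, w}" "N b = {v, a, c, w}" "N c = {v, b, d, w}" "N d = {v, a, c, w}"
    and w: "w \<notin> {v, a, b, c, d}"
    by (rule link_cycle_common_outer[OF \<open>v \<in> V\<close> assms])
  have dist: "distinct [a, b, c, d]" and Nv: "N v = {a, b, c, d}"
    using assms(1) unfolding link_path_def by auto
  have sub: "{a, b, c, d} \<subseteq> N w" using N by (auto simp: in_N_iff adj_sym)
  have wV: "w \<in> V" using N(1) N_subset_V by blast
  have "card {a, b, c, d} = card (N w)" using distinct_card[OF dist] card_N[OF wV] by simp
  then have Nw: "N w = {a, b, c, d}"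
    using card_subset_eq[OF _ sub] finite_V unfolding neighbours_def by simp
  have "V = {v, a, b, c, d, w}"
  proof
    show "V \<subseteq> {v, a, b, c, d, w}" using V_subset_closed[of v] \<open>v \<in> V\<close> Nv N Nw by auto
    show "{v, a, b, c, d, w} \<subseteq> V" using \<open>v \<in> V\<close> Nv wV N_subset_V by blast
  qed
  moreover have "distinct [v, a, b, w, c, d]" using dist w Nv in_N_iff adj_irrefl by auto
  ultimately show ?thesis using octahedron_iso_TC6 Nv N Nw by blast
qed

end

locale locally_P4 = locally_C4_or_P4 +
  assumes link_ends_nonadj: "link_path v p1 p2 p3 p4 \<Longrightarrow> \<not> E p1 p4"
begin

text \<open>The middles of u: in the path link of u these are its two inner vertices.\<close>

definition middles :: "'a \<Rightarrow> 'a set" where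
  "middles u = {q. \<exists>z1 z2. z1 \<noteq> z2 \<and> E u q \<and> E u z1 \<and> E q z1 \<and> E u z2 \<and> E q z2}"

lemma middles_sym: "q \<in> middles u \<longleftrightarrow> u \<in> middles q"
  unfolding middles_def using adj_symD by blast

lemma middles_adj: "q \<in> middles u \<Longrightarrow> E u q"
  unfolding middles_def by blast

lemma middles_link_path:
  assumes "link_path u p1 p2 p3 p4"
  shows "middles u = {p2, p3}"
proof -
  have d: "distinct [p1, p2, p3, p4]" and Nu: "N u = {p1, p2, p3, p4}"
    and e: "E p1 p2" "E p2 p3" "E p3 p4" "\<not> E p1 p3" "\<not> E p2 p4" "\<not> E p1 p4"
    using assms link_ends_nonadj[OF assms] unfolding link_path_def by auto
  have Eu: "E u p1" "E u p2" "E u p3" "E u p4" using Nu in_N_iff by auto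
  have "p2 \<in> middles u"
    unfolding middles_def using d Eu e adj_symD by (intro CollectI exI[of _ p1] exI[of _ p3]) auto
  moreover have "p3 \<in> middles u"
    unfolding middles_def using d Eu e adj_symD by (intro CollectI exI[of _ p2] exI[of _ p4]) auto
  moreover have "q \<in> {p2, p3}" if qm: "q \<in> middles u" for q
  proof -
    obtain z1 z2 where z: "z1 \<noteq> z2" "E u q" "E u z1" "E q z1" "E u z2" "E q z2"
      using qm unfolding middles_def by blast
    then have q: "q \<in> {p1, p2, p3, p4}" and zs: "z1 \<in> {p1, p2, p3, p4}" "z2 \<in> {p1, p2, p3, p4}"
      using Nu in_N_iff by blast+
    have "q \<noteq> p1"
    proof
      assume "q = p1"
      then have "z1 = p2" "z2 = p2" using zs z(4,6) e adj_irrefl by auto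
      then show False using z(1) by simp
    qed
    moreover have "q \<noteq> p4"
    proof
      assume "q = p4"
      then have "z1 = p3" "z2 = p3" using zs z(4,6) e adj_irrefl adj_symD by blast+
      then show False using z(1) by simp
    qed
    ultimately show ?thesis using q by blast
  qed
  ultimately show ?thesis by blast
qed

lemma link_path_end_common:
  assumes "link_path u p1 p2 p3 p4"
  shows "N u \<inter> N p1 = {p2}"
proof -
  have Nu: "N u = {p1, p2, p3, p4}" and e: "E p1 p2" "\<not> E p1 p3" "\<not> E p1 p4"
    using assms link_ends_nonadj[OF assms] unfolding link_path_def by auto
  then show ?thesis using adj_irrefl by (auto simp: in_N_iff)
qed

lemma middles_pair:
  assumes "u \<in> V"
  obtains x y where "middles u = {x, y}" "x \<noteq> y" "E x y"
proof -
  obtain p1 p2 p3 p4 where "link_path u p1 p2 p3 p4" by (rule link_path_exists[OF assms])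
  then show ?thesis using that middles_link_path unfolding link_path_def by auto
qed

lemma middles_other:
  assumes "u \<in> V" "x \<in> middles u"
  obtains y where "middles u = {x, y}" "x \<noteq> y"
  using middles_pair[OF assms(1)] assms(2) by (metis doubleton_eq_iff insertE singletonD)

lemma middles_adj_each_other:
  assumes "u \<in> V" "x \<in> middles u" "y \<in> middles u" "x \<noteq> y"
  shows "E x y"
  using middles_pair[OF assms(1)] assms(2-4) adj_symD by (metis insertE singletonD)

lemma non_middle_unique_common:
  assumes "u \<in> V" "q \<in> N u" "q \<notin> middles u"
  obtains z where "N u \<inter> N q = {z}"
proof -
  obtain p1 p2 p3 p4 where l: "link_path u p1 p2 p3 p4" by (rule link_path_exists[OF assms(1)])
  then have "q = p1 \<or> q = p4"
    using assms(2,3) middles_link_path[OF l] unfolding link_path_def by auto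
  then show ?thesis
    using that link_path_end_common[OF l] link_path_end_common[OF link_path_rev[OF l]] by blast
qed

lemma link_path_inner_not_middle:
  assumes "b \<in> V" "link_path b x a c y"
  shows "a \<notin> middles c"
proof
  assume "a \<in> middles c"
  have mb: "middles b = {a, c}" using middles_link_path[OF assms(2)] .
  have d: "distinct [x, a, c, y]" and xa: "E x a" and xb: "E b x" and ab: "E b a"
    using assms(2) in_N_iff unfolding link_path_def by auto
  have aV: "a \<in> V" using xa adj_in_V by blast
  have "b \<noteq> c" using mb middles_adj adj_irrefl by blast
  moreover have "b \<in> middles a" "c \<in> middles a" using mb \<open>a \<in> middles c\<close> middles_sym by blast+
  ultimately have ma: "middles a = {b, c}"
    using middles_other[OF aV \<open>b \<in> middles a\<close>] by (metis doubleton_eq_iff insertE singletonD)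
  have "x \<in> N a" "x \<notin> middles a" using xa adj_symD in_N_iff ma xb adj_irrefl d by auto
  then obtain z where z: "N a \<inter> N x = {z}" using non_middle_unique_common[OF aV] by blast
  have "b \<in> N a \<inter> N x" using xb ab adj_symD in_N_iff by blast
  then have "N x \<inter> N a = {b}" using z by (simp add: Int_commute)
  moreover have "N x \<inter> N b = {a}" using link_path_end_common[OF assms(2)] by blast
  moreover have "x \<in> V" "a \<in> N x" "b \<in> N x" using xa xb adj_in_V adj_symD in_N_iff by blast+
  ultimately show False using link_no_isolated_edge ab adj_symD by blast
qed

lemma middles_no_triangle:
  assumes "b \<in> V" "a \<in> middles b" "c \<in> middles b" "a \<noteq> c"
  shows "a \<notin> middles c"
proof
  assume ac: "a \<in> middles c"
  obtain p1 p2 p3 p4 where l: "link_path b p1 p2 p3 p4" by (rule link_path_exists[OF assms(1)])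
  then have "(a = p2 \<and> c = p3) \<or> (a = p3 \<and> c = p2)"
    using middles_link_path assms(2-4) by auto
  then show False
    using link_path_inner_not_middle[OF assms(1) l]
      link_path_inner_not_middle[OF assms(1) link_path_rev[OF l]] ac
    by blast
qed

definition next_middle :: "'a \<Rightarrow> 'a \<Rightarrow> 'a" where
  "next_middle u v = (SOME w. w \<in> middles v \<and> w \<noteq> u)"

lemma middles_next_middle:
  assumes "v \<in> V" "u \<in> middles v"
  shows "middles v = {u, next_middle u v}" "u \<noteq> next_middle u v"
proof -
  obtain y where y: "middles v = {u, y}" "u \<noteq> y" by (rule middles_other[OF assms])
  then have "next_middle u v = y" unfolding next_middle_def by (intro some_equality) auto
  then show "middles v = {u, next_middle u v}" "u \<noteq> next_middle u v" using y by auto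
qed

end

fun recur2 :: "('a \<Rightarrow> 'a \<Rightarrow> 'a) \<Rightarrow> 'a \<Rightarrow> 'a \<Rightarrow> nat \<Rightarrow> 'a" where
  "recur2 f a b 0 = a"
| "recur2 f a b (Suc 0) = b"
| "recur2 f a b (Suc (Suc k)) = f (recur2 f a b k) (recur2 f a b (Suc k))"

locale middle_walk = locally_P4 +
  fixes a0 b0
  assumes b0_in_V: "b0 \<in> V" and a0_middle: "a0 \<in> middles b0"
begin

abbreviation "s \<equiv> recur2 next_middle a0 b0"

lemma s_step: "s (k + 2) = next_middle (s k) (s (k + 1))"
  by (simp add: numeral_eq_Suc)

declare recur2.simps(3)[simp del]

lemma s_in_V_middle: "s k \<in> V \<and> s (k + 1) \<in> V \<and> s k \<in> middles (s (k + 1))"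
proof (induction k)
  case 0
  then show ?case using b0_in_V a0_middle middles_adj[OF a0_middle] adj_in_V by simp
next
  case (Suc k)
  then have "middles (s (k + 1)) = {s k, s (k + 2)}"
    unfolding s_step using middles_next_middle(1) by blast
  then have "s (k + 2) \<in> middles (s (k + 1))" by blast
  then have "s (k + 1) \<in> middles (s (k + 2))" "E (s (k + 1)) (s (k + 2))"
    using middles_sym middles_adj by blast+
  then show ?case using adj_in_V by simp
qed

lemma s_in_V: "s k \<in> V"
  using s_in_V_middle by blast

lemma middles_s: "middles (s (k + 1)) = {s k, s (k + 2)}" "s k \<noteq> s (k + 2)"
  unfolding s_step using middles_next_middle s_in_V_middle by blast+

lemma adj_s_Suc: "E (s k) (s (k + 1))"
  using s_in_V_middle middles_adj adj_symD by blast

lemma adj_s_Suc_Suc: "E (s k) (s (k + 2))"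
  using middles_adj_each_other[OF s_in_V] middles_s by blast

lemma link_path_s_ends:
  assumes l: "link_path (s (k + 2)) q1 (s (k + 1)) (s (k + 3)) q4"
  shows "q1 = s k" "q4 = s (k + 4)"
proof -
  have Nu: "N (s (k + 2)) = {q1, s (k + 1), s (k + 3), q4}"
    and e: "\<not> E q1 (s (k + 3))" "\<not> E (s (k + 1)) q4"
    using l unfolding link_path_def by auto
  have m1: "middles (s (k + 1)) = {s k, s (k + 2)}"
    and m2: "middles (s (k + 2)) = {s (k + 1), s (k + 3)}" "s (k + 1) \<noteq> s (k + 3)"
    and m3: "middles (s (k + 3)) = {s (k + 2), s (k + 4)}"
    using middles_s[of k] middles_s[of "k + 1"] middles_s[of "k + 2"]
    by (simp_all add: eval_nat_numeral)
  have no_tri: "s (k + 1) \<notin> middles (s (k + 3))" "s (k + 3) \<notin> middles (s (k + 1))"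
    using middles_no_triangle[OF s_in_V[of "k + 2"]] m2 by auto
  have "E (s (k + 2)) (s (k + 4))" "E (s (k + 3)) (s (k + 4))"
    using adj_s_Suc_Suc[of "k + 2"] adj_s_Suc[of "k + 3"] by (simp_all add: eval_nat_numeral)
  then have "s (k + 4) \<in> {q1, s (k + 1), s (k + 3), q4}"
    "s (k + 4) \<noteq> q1" "s (k + 4) \<noteq> s (k + 3)" "s (k + 4) \<noteq> s (k + 1)"
    using Nu in_N_iff e(1) adj_symD adj_irrefl no_tri(1) m3 by auto
  then show "q4 = s (k + 4)" by blast
  have "E (s (k + 2)) (s k)" "E (s (k + 1)) (s k)"
    using adj_s_Suc_Suc[of k] adj_s_Suc[of k] adj_symD by blast+
  then have "s k \<in> {q1, s (k + 1), s (k + 3), q4}"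
    "s k \<noteq> q4" "s k \<noteq> s (k + 1)" "s k \<noteq> s (k + 3)"
    using Nu in_N_iff e(2) adj_irrefl no_tri(2) m1 by auto
  then show "q1 = s k" by blast
qed

lemma link_path_s: "link_path (s (k + 2)) (s k) (s (k + 1)) (s (k + 3)) (s (k + 4))"
proof -
  obtain p1 p2 p3 p4 where l: "link_path (s (k + 2)) p1 p2 p3 p4"
    by (rule link_path_exists[OF s_in_V])
  have "{p2, p3} = {s (k + 1), s (k + 3)}"
    using middles_link_path[OF l] middles_s[of "k + 1"] by (simp add: eval_nat_numeral)
  then consider "p2 = s (k + 1)" "p3 = s (k + 3)" | "p2 = s (k + 3)" "p3 = s (k + 1)"
    by (auto simp: doubleton_eq_iff)
  then show ?thesis
  proof cases
    case 1
    then show ?thesis using l link_path_s_ends[of k p1 p4] by simp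
  next
    case 2
    then show ?thesis using link_path_rev[OF l] link_path_s_ends[of k p4 p1] by simp
  qed
qed

lemma s_pair_eq_next:
  assumes "s i = s j" "s (i + 1) = s (j + 1)"
  shows "s (i + 2) = s (j + 2)"
proof -
  have "{s i, s (i + 2)} = {s j, s (j + 2)}" using middles_s(1)[of i] middles_s(1)[of j] assms(2) by simp
  then show ?thesis using assms(1) middles_s(2)[of i] by (auto simp: doubleton_eq_iff)
qed

lemma s_pair_eq_prev:
  assumes "s (i + 1) = s (j + 1)" "s (i + 2) = s (j + 2)"
  shows "s i = s j"
proof -
  have "{s i, s (i + 2)} = {s j, s (j + 2)}" using middles_s(1)[of i] middles_s(1)[of j] assms(1) by simp
  then show ?thesis using assms(2) middles_s(2)[of i] by (auto simp: doubleton_eq_iff)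
qed

lemma s_pair_eq_start:
  "i \<le> j \<Longrightarrow> s i = s j \<Longrightarrow> s (i + 1) = s (j + 1) \<Longrightarrow> s 0 = s (j - i) \<and> s 1 = s (j - i + 1)"
proof (induction i arbitrary: j)
  case 0
  then show ?case by simp
next
  case (Suc i)
  then obtain j' where j: "j = Suc j'" by (cases j) auto
  have "s (i + 1) = s (j' + 1)" "s (i + 2) = s (j' + 2)"
    using Suc.prems j by (simp_all add: eval_nat_numeral)
  then have "s i = s j'" by (rule s_pair_eq_prev)
  then show ?case using Suc.IH[of j'] Suc.prems(1) \<open>s (i + 1) = s (j' + 1)\<close> j by simp
qed

lemma s_shift_of_start:
  assumes "s 0 = s d" "s 1 = s (d + 1)"
  shows "s (k + d) = s k"
proof -
  have "s (k + d) = s k \<and> s (k + 1 + d) = s (k + 1)"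
  proof (induction k)
    case 0
    then show ?case using assms by simp
  next
    case (Suc k)
    then have "s (k + d + 2) = s (k + 2)" using s_pair_eq_next[of "k + d" k] by (simp add: ac_simps)
    then show ?case using Suc.IH by (simp add: ac_simps eval_nat_numeral)
  qed
  then show ?thesis ..
qed

lemma s_shift_of_pair_eq:
  assumes "i \<le> j" "s i = s j" "s (i + 1) = s (j + 1)"
  shows "s (k + (j - i)) = s k"
  using s_pair_eq_start[OF assms] s_shift_of_start by blast

lemma s_periodic: "\<exists>d>0. \<forall>k. s (k + d) = s k"
proof -
  let ?pair = "\<lambda>k. (s k, s (k + 1))"
  have "range ?pair \<subseteq> V \<times> V" using s_in_V by auto
  then have "finite (range ?pair)" using finite_V by (meson finite_SigmaI finite_subset)
  then have "\<not> inj ?pair" using finite_imageD infinite_UNIV_nat by blast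
  then obtain i j where "i \<noteq> j" "?pair i = ?pair j" unfolding inj_def by blast
  then obtain i j where "i < j" "s i = s j" "s (i + 1) = s (j + 1)"
    by (metis linorder_neqE_nat prod.inject)
  then show ?thesis using s_shift_of_pair_eq[of i j] by (intro exI[of _ "j - i"]) auto
qed

definition period :: nat where
  "period = (LEAST d. 0 < d \<and> (\<forall>k. s (k + d) = s k))"

lemma period_pos: "0 < period" and s_add_period: "s (k + period) = s k"
  using LeastI_ex[OF s_periodic] unfolding period_def by blast+

lemma period_least: "0 < d \<Longrightarrow> d < period \<Longrightarrow> \<exists>k. s (k + d) \<noteq> s k"
  using not_less_Least[of d "\<lambda>d. 0 < d \<and> (\<forall>k. s (k + d) = s k)"] unfolding period_def by blast

lemma s_mod_period: "s k = s (k mod period)"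
proof -
  have "s (r + q * period) = s r" for r q
  proof (induction q)
    case (Suc q)
    then show ?case using s_add_period[of "r + q * period"] by (simp add: ac_simps)
  qed simp
  then show ?thesis by (metis mod_div_mult_eq)
qed

text \<open>A reversed coincidence propagates inwards until s x = s (x + 1) or s x = s (x + 2),
  contradicting adjacency.\<close>

lemma s_no_reflection:
  assumes "a \<le> b" "s a = s (b + 1)" "s (a + 1) = s b"
  shows False
  using assms
proof (induction "b - a" arbitrary: a b rule: less_induct)
  case less
  consider "b = a" | "b = a + 1" | "a + 2 \<le> b" using less.prems(1) by linarith
  then show False
  proof cases
    case 1
    then show False using less.prems(3) adj_s_Suc[of a] adj_irrefl by simp
  next
    case 2
    then show False using less.prems(2) adj_s_Suc_Suc[of a] adj_irrefl by simp
  next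
    case 3
    then have "middles (s b) = {s (b - 1), s (b + 1)}"
      using middles_s(1)[of "b - 1"] by (simp add: numeral_eq_Suc)
    then have "{s a, s (a + 2)} = {s (b - 1), s (b + 1)}"
      using middles_s(1)[of a] less.prems(3) by simp
    then have "s (a + 1 + 1) = s (b - 1)"
      using less.prems(2) middles_s(2)[of a] by (auto simp: doubleton_eq_iff)
    moreover have "s (a + 1) = s (b - 1 + 1)" using 3 less.prems(3) by simp
    moreover have "b - 1 - (a + 1) < b - a" "a + 1 \<le> b - 1" using 3 by auto
    ultimately show False using less.hyps by blast
  qed
qed

lemma s_inj_below_period:
  assumes "i < j" "j < period"
  shows "s i \<noteq> s j"
proof
  assume eq: "s i = s j"
  show False
  proof (cases "s (i + 1) = s (j + 1)")
    case True
    have "0 < j - i" "j - i < period" using assms by auto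
    then obtain k where "s (k + (j - i)) \<noteq> s k" using period_least by blast
    then show False using s_shift_of_pair_eq[OF less_imp_le[OF assms(1)] eq True] by blast
  next
    case False
    have "middles (s i) = {s (i + period - 1), s (i + 1)}"
      using middles_s(1)[of "i + period - 1"] period_pos s_add_period[of i] s_add_period[of "i + 1"]
      by (simp add: numeral_eq_Suc)
    moreover have "s (j + 1) \<in> middles (s j)"
      using middles_s(1)[of "j - 1"] assms(1) by (simp add: numeral_eq_Suc)
    ultimately have "s (j + 1) = s (i + period - 1)" using eq False by auto
    moreover have "s j = s (i + period - 1 + 1)" using eq s_add_period[of i] period_pos by simp
    moreover have "j \<le> i + period - 1" using assms by linarith
    ultimately show False using s_no_reflection by blast
  qed
qed

lemma s_eq_iff_mod: "s a = s b \<longleftrightarrow> a mod period = b mod period"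
proof
  assume "s a = s b"
  then have "s (a mod period) = s (b mod period)" using s_mod_period by metis
  then show "a mod period = b mod period"
    using s_inj_below_period period_pos by (metis linorder_neqE_nat mod_less_divisor)
qed (metis s_mod_period)

lemma period_ge_6: "6 \<le> period"
proof (rule ccontr)
  assume "\<not> 6 \<le> period"
  have l: "link_path (s 2) (s 0) (s 1) (s 3) (s 4)" using link_path_s[of 0] by (simp only: add_0)
  then have d: "distinct [s 0, s 1, s 3, s 4]" and Nu: "N (s 2) = {s 0, s 1, s 3, s 4}"
    unfolding link_path_def by auto
  have "s 2 \<notin> N (s 2)" using adj_irrefl in_N_iff by blast
  then have d2: "s 2 \<noteq> s 0" "s 2 \<noteq> s 1" "s 2 \<noteq> s 3" "s 2 \<noteq> s 4" using Nu by auto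
  have "\<not> E (s 0) (s 4)" using link_ends_nonadj[OF l] .
  moreover have "E (s 4) (s 5)" using adj_s_Suc[of 4] by simp
  moreover have "s period = s 0" using s_add_period[of 0] by simp
  moreover have "period \<in> {1, 2, 3, 4, 5}" using \<open>\<not> 6 \<le> period\<close> period_pos by auto
  ultimately show False using d d2 adj_symD by auto
qed

lemma N_s: "N (s a) = {s (a + (period - 2)), s (a + (period - 1)), s (a + (period + 1)), s (a + (period + 2))}"
proof -
  have "link_path (s (a + (period - 2) + 2)) (s (a + (period - 2))) (s (a + (period - 2) + 1))
      (s (a + (period - 2) + 3)) (s (a + (period - 2) + 4))"
    by (rule link_path_s)
  moreover have "a + (period - 2) + 2 = a + period" "a + (period - 2) + 1 = a + (period - 1)"
    "a + (period - 2) + 3 = a + (period + 1)" "a + (period - 2) + 4 = a + (period + 2)"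
    using period_ge_6 by auto
  ultimately show ?thesis using s_add_period[of a] unfolding link_path_def by metis
qed

lemma adj_s_add_iff:
  assumes "q < period"
  shows "E (s a) (s (a + q)) \<longleftrightarrow> q \<in> {1, 2, period - 2, period - 1}"
proof -
  have eq: "s (a + q) = s (a + t) \<longleftrightarrow> q = t mod period" for t
    using s_eq_iff_mod mod_add_left_cancel assms by simp
  have residues: "(period - 2) mod period = period - 2" "(period - 1) mod period = period - 1"
    "(period + 1) mod period = 1" "(period + 2) mod period = 2"
    using period_ge_6 mod_add_self1[of period 1] mod_add_self1[of period 2] by simp_all
  have "E (s a) (s (a + q)) \<longleftrightarrow> s (a + q) \<in> N (s a)" using in_N_iff by blast
  also have "\<dots> \<longleftrightarrow> s (a + q) = s (a + (period - 2)) \<or> s (a + q) = s (a + (period - 1))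
      \<or> s (a + q) = s (a + (period + 1)) \<or> s (a + q) = s (a + (period + 2))"
    unfolding N_s by blast
  also have "\<dots> \<longleftrightarrow> q \<in> {1, 2, period - 2, period - 1}"
    unfolding eq residues by auto
  finally show ?thesis .
qed

lemma TC_adj_iff_adj_s:
  assumes "i \<in> {1..period}" "j \<in> {1..period}"
  shows "TC_adj period i j \<longleftrightarrow> E (s i) (s j)"
proof -
  define q where "q = (i + period - j) mod period"
  have "q < period" unfolding q_def using period_pos by simp
  have "(j + q) mod period = (i + period) mod period"
    unfolding q_def using assms by (simp add: mod_add_right_eq)
  then have "s (j + q) = s i" using s_eq_iff_mod by simp
  then have "E (s i) (s j) \<longleftrightarrow> q \<in> {1, 2, period - 2, period - 1}"
    using adj_s_add_iff[OF \<open>q < period\<close>, of j] adj_sym by metis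
  moreover have "TC_adj period i j \<longleftrightarrow> i \<noteq> j \<and> q \<in> {1, 2, period - 2, period - 1}"
    unfolding q_def using TC_adj_iff_mod period_ge_6 assms by simp
  moreover have "i = j \<Longrightarrow> q = 0" unfolding q_def by simp
  ultimately show ?thesis using period_ge_6 by auto
qed

lemma bij_betw_s: "bij_betw s {1..period} V"
proof -
  have "inj_on s {1..period}"
  proof (rule linorder_inj_onI')
    fix i j assume ij: "i \<in> {1..period}" "j \<in> {1..period}" "i < j"
    show "s i \<noteq> s j"
    proof (cases "j = period")
      case True
      then have "s j = s 0" using s_add_period[of 0] by simp
      then show ?thesis using s_inj_below_period[of 0 i] ij True by auto
    next
      case False
      then show ?thesis using s_inj_below_period[of i j] ij by auto
    qed
  qed
  moreover have s_range: "s k \<in> s ` {1..period}" for k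
  proof (cases "k mod period = 0")
    case True
    then have "s k = s period" using s_eq_iff_mod by simp
    then show ?thesis using period_pos by auto
  next
    case False
    then have "k mod period \<in> {1..period}" using period_pos by (simp add: order_less_imp_le)
    then show ?thesis using s_mod_period by blast
  qed
  have "\<forall>y\<in>s ` {1..period}. N y \<subseteq> s ` {1..period}"
  proof
    fix y assume "y \<in> s ` {1..period}"
    then obtain a where "y = s a" by blast
    then show "N y \<subseteq> s ` {1..period}" using s_range by (simp add: N_s)
  qed
  then have "V \<subseteq> s ` {1..period}" by (rule V_subset_closed[OF s_range s_in_V])
  moreover have "s ` {1..period} \<subseteq> V" using s_in_V by blast
  ultimately show ?thesis unfolding bij_betw_def by blast
qed

lemma iso_TC_period: "graph_iso V E {1..period} (TC_adj period)"
proof -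
  have "graph_iso {1..period} (TC_adj period) V E"
    unfolding graph_iso_def using bij_betw_s TC_adj_iff_adj_s by blast
  then show ?thesis by (rule graph_iso_sym)
qed

end

theorem lemmaA19:
  fixes V :: "'a set" and E :: "'a \<Rightarrow> 'a \<Rightarrow> bool"
  assumes "finite_simple_graph V E"
    and "connected_graph V E"
    and "regular 4 V E"
    and "\<forall>v\<in>V. graph_iso (neighbours V E v) (induced_adj E (neighbours V E v)) {0..<4} C4_adj
             \<or> graph_iso (neighbours V E v) (induced_adj E (neighbours V E v)) {0..<4} P4_adj"
  shows "\<exists>n\<ge>6. graph_iso V E {1..n} (TC_adj n)"
proof -
  interpret locally_C4_or_P4 V E using assms by (rule locally_C4_or_P4.intro)
  show ?thesis
  proof (cases "\<exists>v p1 p2 p3 p4. link_path v p1 p2 p3 p4 \<and> E p1 p4")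
    case True
    then obtain v a b c d where "link_path v a b c d" "E a d" by blast
    then have "graph_iso V E {1..6} (TC_adj 6)" by (rule link_cycle_iso_TC6)
    then show ?thesis by (intro exI[of _ 6]) simp
  next
    case False
    interpret locally_P4 V E
      using False by (intro locally_P4.intro locally_C4_or_P4_axioms locally_P4_axioms.intro) blast
    obtain v where "v \<in> V" using connected unfolding connected_graph_def by blast
    then obtain a where "a \<in> middles v" by (metis middles_pair insertI1)
    then interpret middle_walk V E a v
      using \<open>v \<in> V\<close> by (intro middle_walk.intro locally_P4_axioms middle_walk_axioms.intro)
    show ?thesis using iso_TC_period period_ge_6 by blast
  qed
qed

end
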